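(* (Unconditional stability of the one-dimensional Crank–Nicolson collocation scheme.) Let $\mathcal A$ be the one-dimensional piecewise quadratic collocation matrix (see context) for $a<b$, $\gamma\in(0,1)$, $M\ge2$. Let $T>0$, $N\ge1$, $\tau=T/N$, and set $C_a=\frac{2(b-a)^{1-\gamma}}{1-\gamma}$. If vectors $\varepsilon^0,\varepsilon^1,\dots,\varepsilon^N\in\mathbb R^{2M-1}$ satisfy $$\Big(I+\frac{\tau}{2}\mathcal A\Big)\varepsilon^k=\Big(I-\frac{\tau}{2}\mathcal A\Big)\varepsilon^{k-1},\qquad k=1,\dots,N,$$ then $\|\varepsilon^k\|_\infty\le e^{TC_a}\|\varepsilon^0\|_\infty$ for all $k=0,1,\dots,N$. (In particular, the difference of two solutions of the scheme with the same data but different initial values is bounded in this way, for every $M$ and every $\tau$.)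
   Context: Fix real numbers $a<b$, an exponent $\gamma\in(0,1)$ and an integer $M\ge 2$. Set $h=(b-a)/M$ and $x_s=a+sh$ for $s\in\{0,\tfrac12,1,\tfrac32,\dots,M\}$. The piecewise quadratic Lagrange basis functions on $[a,b]$ are: for integers $0\le l\le M$, $\phi_l(x)=\frac{x-x_{l-1}}{h}\cdot\frac{2x-(x_l+x_{l-1})}{h}$ for $x\in[x_{l-1},x_l]\cap[a,b]$, $\phi_l(x)=\frac{x_{l+1}-x}{h}\cdot\frac{(x_{l+1}+x_l)-2x}{h}$ for $x\in[x_l,x_{l+1}]\cap[a,b]$, and $\phi_l(x)=0$ otherwise; and for $l=1,\dots,M$, $\phi_{l-\frac12}(x)=\frac{4(x-x_{l-1})(x_l-x)}{h^2}$ for $x\in[x_{l-1},x_l]$ and $0$ otherwise. For $i\in\{1,\dots,2M-1\}$ and $j\in\{0,1,\dots,2M\}$ define $$d_i=\int_a^b\frac{dy}{|x_{i/2}-y|^{\gamma}},\qquad g_{ij}=\int_a^b\frac{\phi_{j/2}(y)}{|x_{i/2}-y|^{\gamma}}\,dy .$$ The one-dimensional collocation matrix is the $(2M-1)\times(2M-1)$ matrix $\mathcal A$ with entries $A_{ij}=\delta_{ij}d_i-g_{ij}$, $i,j\in\{1,\dots,2M-1\}$. The following fact, established in earlier work, may be used: $g_{ij}>0$ for all $i,j\in\{1,\dots,2M-1\}$, and $\mathcal A$ is strictly diagonally dominant by rows. For a vector $v$, $\|v\|_\infty=\max_i|v_i|$. *)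

theory Defs
  imports "HOL-Analysis.Analysis"
begin

text \<open>Mesh: h = (b-a)/M, x_s = a + s h. We write nodes with half-integer index s = i/2
  as xnode a b M i = a + i h / 2 (i a natural number).\<close>

definition hstep :: "real \<Rightarrow> real \<Rightarrow> nat \<Rightarrow> real" where
  "hstep a b M = (b - a) / real M"

definition xnode :: "real \<Rightarrow> real \<Rightarrow> nat \<Rightarrow> nat \<Rightarrow> real" where
  "xnode a b M i = a + real i * hstep a b M / 2"

definition phi_int :: "real \<Rightarrow> real \<Rightarrow> nat \<Rightarrow> nat \<Rightarrow> real \<Rightarrow> real" where
  "phi_int a b M l x =
     (let h = hstep a b M; xl = a + real l * h; xm = xl - h; xp = xl + h in
      if x \<in> {xm..xl} \<inter> {a..b} then ((x - xm) / h) * ((2 * x - (xl + xm)) / h)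
      else if x \<in> {xl..xp} \<inter> {a..b} then ((xp - x) / h) * (((xp + xl) - 2 * x) / h)
      else 0)"

text \<open>Midpoint basis function phi_{l-1/2}, l = 1..M.\<close>
definition phi_mid :: "real \<Rightarrow> real \<Rightarrow> nat \<Rightarrow> nat \<Rightarrow> real \<Rightarrow> real" where
  "phi_mid a b M l x =
     (let h = hstep a b M; xl = a + real l * h; xm = xl - h in
      if x \<in> {xm..xl} then 4 * (x - xm) * (xl - x) / h\<^sup>2 else 0)"

text \<open>phi_{j/2} for j = 0..2M.\<close>
definition phi_half :: "real \<Rightarrow> real \<Rightarrow> nat \<Rightarrow> nat \<Rightarrow> real \<Rightarrow> real" where
  "phi_half a b M j = (if even j then phi_int a b M (j div 2) else phi_mid a b M ((j + 1) div 2))"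

definition d_coef :: "real \<Rightarrow> real \<Rightarrow> real \<Rightarrow> nat \<Rightarrow> nat \<Rightarrow> real" where
  "d_coef a b \<gamma> M i = integral {a..b} (\<lambda>y. 1 / \<bar>xnode a b M i - y\<bar> powr \<gamma>)"

definition g_coef :: "real \<Rightarrow> real \<Rightarrow> real \<Rightarrow> nat \<Rightarrow> nat \<Rightarrow> nat \<Rightarrow> real" where
  "g_coef a b \<gamma> M i j = integral {a..b} (\<lambda>y. phi_half a b M j y / \<bar>xnode a b M i - y\<bar> powr \<gamma>)"

definition coll_A :: "real \<Rightarrow> real \<Rightarrow> real \<Rightarrow> nat \<Rightarrow> nat \<Rightarrow> nat \<Rightarrow> real" where
  "coll_A a b \<gamma> M i j = (if i = j then d_coef a b \<gamma> M i else 0) - g_coef a b \<gamma> M i j"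

definition supnorm :: "nat \<Rightarrow> (nat \<Rightarrow> real) \<Rightarrow> real" where
  "supnorm n v = Max ((\<lambda>i. \<bar>v i\<bar>) ` {1..n})"

end

theory Submission
  imports Defs
begin

text \<open>Only weak diagonal dominance of \<open>\<A>\<close>, with diagonal at most \<open>C\<^sub>a\<close>, matters: at a
  component where \<open>|\<epsilon>\<^sup>k|\<close> is maximal, \<open>\<epsilon>\<^sup>k\<close> and \<open>\<A>\<epsilon>\<^sup>k\<close> have the same sign, so
  \<open>\<parallel>\<epsilon>\<^sup>k\<parallel> \<le> (1 + \<tau>C\<^sub>a)\<parallel>\<epsilon>\<^sup>k\<^sup>-\<^sup>1\<parallel>\<close>, and \<open>(1 + \<tau>C\<^sub>a)\<^sup>N \<le> e\<^sup>T\<^sup>C\<^sup>a\<close>.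
  Dominance comes from \<open>g\<^sub>i\<^sub>j \<ge> 0\<close> together with \<open>\<Sigma>\<^sub>j g\<^sub>i\<^sub>j = d\<^sub>i\<close> (partition of unity).
  For \<open>g\<^sub>i\<^sub>j \<ge> 0\<close> split \<open>[a, b]\<close> into mesh cells; on each, \<open>\<phi>\<^sub>j\<^sub>/\<^sub>2\<close> is a local quadratic
  Lagrange function, which changes sign at the cell midpoint exactly where the kernel
  \<open>|x\<^sub>i\<^sub>/\<^sub>2 - y|\<^sup>-\<^sup>\<gamma>\<close>, divided by a suitable reference weight, crosses a constant.\<close>

section \<open>Moments of the weakly singular kernel\<close>

definition singular_kernel :: "real \<Rightarrow> real \<Rightarrow> real \<Rightarrow> real" where
  "singular_kernel \<gamma> x y = 1 / \<bar>x - y\<bar> powr \<gamma>"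

lemma has_integral_reflect_interval:
  fixes f :: "real \<Rightarrow> 'a::euclidean_space"
  assumes "(f has_integral I) {p..q}" "p \<le> q"
  shows "((\<lambda>y. f (p + q - y)) has_integral I) {p..q}"
proof -
  have "((\<lambda>y. f ((-1) *\<^sub>R y + (p + q))) has_integral (1 / \<bar>-1\<bar> ^ DIM(real)) *\<^sub>R I)
          ((\<lambda>y. (1 / -1) *\<^sub>R y + - ((1 / -1) *\<^sub>R (p + q))) ` cbox p q)"
    using assms by (intro has_integral_affinity) auto
  moreover have "(\<lambda>y::real. p + q - y) ` {p..q} = {p..q}"
    by (auto simp: image_iff intro!: exI[where x="p + q - _"])
  ultimately show ?thesis by simp
qed

lemma kernel_moment_right:
  fixes x p q \<gamma> :: real and k :: nat
  assumes "x \<le> p" "p \<le> q" "\<gamma> < 1"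
  shows "((\<lambda>y. (y - x)^k * singular_kernel \<gamma> x y) has_integral
           ((q - x) powr (real k + 1 - \<gamma>) - (p - x) powr (real k + 1 - \<gamma>)) / (real k + 1 - \<gamma>)) {p..q}"
proof -
  define e where "e = real k + 1 - \<gamma>"
  have e: "e > 0" using assms by (simp add: e_def)
  have "((\<lambda>y. (y - x)^k * singular_kernel \<gamma> x y) has_integral
       ((\<lambda>y. (y - x) powr e / e) q - (\<lambda>y. (y - x) powr e / e) p)) {p..q}"
  proof (rule fundamental_theorem_of_calculus_interior[OF assms(2)])
    show "continuous_on {p..q} (\<lambda>y. (y - x) powr e / e)"
      using assms e by (intro continuous_intros continuous_on_powr') auto
  next
    fix y assume "y \<in> {p<..<q}"
    then have yx: "y - x > 0" using assms by auto
    have "((\<lambda>y. (y - x) powr e / e) has_real_derivative (e * (y - x) powr (e - 1) * 1) / e) (at y)"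
      using yx e by (intro derivative_eq_intros) auto
    moreover have "(y - x) powr (e - 1) = (y - x)^k * singular_kernel \<gamma> x y"
      using yx by (simp add: e_def powr_diff powr_realpow singular_kernel_def abs_minus_commute)
    ultimately show "((\<lambda>y. (y - x) powr e / e) has_vector_derivative (y - x)^k * singular_kernel \<gamma> x y) (at y)"
      using e by (simp add: has_real_derivative_iff_has_vector_derivative)
  qed
  then show ?thesis by (simp add: e_def diff_divide_distrib)
qed

lemma kernel_moment_left:
  fixes x p q \<gamma> :: real and k :: nat
  assumes "q \<le> x" "p \<le> q" "\<gamma> < 1"
  shows "((\<lambda>y. (y - x)^k * singular_kernel \<gamma> x y) has_integral
           (-1)^k * ((x - p) powr (real k + 1 - \<gamma>) - (x - q) powr (real k + 1 - \<gamma>)) / (real k + 1 - \<gamma>)) {p..q}"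
proof -
  define J where "J = ((x - p) powr (real k + 1 - \<gamma>) - (x - q) powr (real k + 1 - \<gamma>)) / (real k + 1 - \<gamma>)"
  have "((\<lambda>z. (z - (-x))^k * singular_kernel \<gamma> (-x) z) has_integral J) {-q..-p}"
    using kernel_moment_right[of "-x" "-q" "-p" \<gamma> k] assms by (simp add: J_def)
  then have "((\<lambda>y. (-y + x)^k * singular_kernel \<gamma> (-x) (-y)) has_integral J) {p..q}"
    by (subst has_integral_reflect_real[symmetric]) simp
  moreover have "(-y + x)^k * singular_kernel \<gamma> (-x) (-y) = (-1)^k * ((y - x)^k * singular_kernel \<gamma> x y)" for y
    by (simp add: singular_kernel_def power_mult_distrib[symmetric] abs_minus_commute)
  ultimately have "((\<lambda>y. (-1)^k * ((y - x)^k * singular_kernel \<gamma> x y)) has_integral J) {p..q}"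
    by simp
  from has_integral_mult_right[OF this, of "(-1)^k"] show ?thesis
    by (simp add: J_def mult.assoc[symmetric] power_mult_distrib[symmetric])
qed

lemma kernel_moment:
  fixes x p q \<gamma> :: real and k :: nat
  assumes "p \<le> x" "x \<le> q" "\<gamma> < 1"
  shows "((\<lambda>y. (y - x)^k * singular_kernel \<gamma> x y) has_integral
           ((-1)^k * (x - p) powr (real k + 1 - \<gamma>) + (q - x) powr (real k + 1 - \<gamma>)) / (real k + 1 - \<gamma>)) {p..q}"
proof -
  have "((\<lambda>y. (y - x)^k * singular_kernel \<gamma> x y) has_integral
           (-1)^k * ((x - p) powr (real k + 1 - \<gamma>) - (x - x) powr (real k + 1 - \<gamma>)) / (real k + 1 - \<gamma>)) {p..x}"
    using assms by (intro kernel_moment_left) auto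
  moreover have "((\<lambda>y. (y - x)^k * singular_kernel \<gamma> x y) has_integral
           ((q - x) powr (real k + 1 - \<gamma>) - (x - x) powr (real k + 1 - \<gamma>)) / (real k + 1 - \<gamma>)) {x..q}"
    using assms by (intro kernel_moment_right) auto
  ultimately show ?thesis
    using has_integral_combine[OF assms(1,2)] assms by (fastforce simp: add_divide_distrib)
qed

lemma kernel_moment_integrable:
  fixes x p q \<gamma> :: real
  assumes "p \<le> q" "\<gamma> < 1"
  shows "(\<lambda>y. (y - x)^k * singular_kernel \<gamma> x y) integrable_on {p..q}"
proof -
  consider "x \<le> p" | "q \<le> x" | "p \<le> x" "x \<le> q" by linarith
  then show ?thesis
    using kernel_moment_right[of x p q] kernel_moment_left[of q x p] kernel_moment[of p x q] assms
    by cases blast+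
qed

lemma quadratic_kernel_integrable:
  fixes x p q \<gamma> \<alpha> \<beta> \<delta> :: real
  assumes "p \<le> q" "\<gamma> < 1"
  shows "(\<lambda>y. (\<alpha> * y^2 + \<beta> * y + \<delta>) * singular_kernel \<gamma> x y) integrable_on {p..q}"
proof -
  note I = kernel_moment_integrable[OF assms, of x]
  have "(\<lambda>y. \<alpha> * ((y - x)^2 * singular_kernel \<gamma> x y) + (2*\<alpha>*x+\<beta>) * ((y - x)^1 * singular_kernel \<gamma> x y)
           + (\<alpha>*x^2+\<beta>*x+\<delta>) * ((y - x)^0 * singular_kernel \<gamma> x y)) integrable_on {p..q}"
    by (intro integrable_add integrable_on_cmult_left[where 'b=real, simplified] I)
  then show ?thesis
    by (rule integrable_eq) (simp add: power2_eq_square algebra_simps)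
qed

lemma quadratic_kernel_integral:
  fixes x p q \<gamma> A B :: real
  assumes "p \<le> x" "x \<le> q" "\<gamma> < 1"
  shows "((\<lambda>y. (A * (y - x)^2 + B * (y - x)) * singular_kernel \<gamma> x y) has_integral
      A * (((x - p) powr (3 - \<gamma>) + (q - x) powr (3 - \<gamma>)) / (3 - \<gamma>))
    + B * (((q - x) powr (2 - \<gamma>) - (x - p) powr (2 - \<gamma>)) / (2 - \<gamma>))) {p..q}"
proof -
  have 2: "((\<lambda>y. (y - x)^2 * singular_kernel \<gamma> x y) has_integral
      ((x - p) powr (3 - \<gamma>) + (q - x) powr (3 - \<gamma>)) / (3 - \<gamma>)) {p..q}"
    using kernel_moment[OF assms, of 2] by (simp add: numeral_eq_Suc)
  have 1: "((\<lambda>y. (y - x)^1 * singular_kernel \<gamma> x y) has_integral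
      ((q - x) powr (2 - \<gamma>) - (x - p) powr (2 - \<gamma>)) / (2 - \<gamma>)) {p..q}"
    using kernel_moment[OF assms, of 1] by simp
  from has_integral_add[OF has_integral_mult_right[OF 2, of A] has_integral_mult_right[OF 1, of B]]
  show ?thesis
    by (rule has_integral_eq[rotated]) (simp add: algebra_simps)
qed

section \<open>The local quadratic Lagrange basis against the kernel\<close>

definition lagrange_lo :: "real \<Rightarrow> real \<Rightarrow> real \<Rightarrow> real" where
  "lagrange_lo c h y = (c + h - y) * (2*c + h - 2*y) / h^2"

definition lagrange_mid :: "real \<Rightarrow> real \<Rightarrow> real \<Rightarrow> real" where
  "lagrange_mid c h y = 4 * (y - c) * (c + h - y) / h^2"

definition lagrange_hi :: "real \<Rightarrow> real \<Rightarrow> real \<Rightarrow> real" where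
  "lagrange_hi c h y = (y - c) * (2*y - 2*c - h) / h^2"

lemma lagrange_lo_reflect: "lagrange_lo c h y = lagrange_hi c h (c + (c + h) - y)"
  by (simp add: lagrange_lo_def lagrange_hi_def algebra_simps)

lemma lagrange_sum: "h \<noteq> 0 \<Longrightarrow> lagrange_lo c h y + lagrange_mid c h y + lagrange_hi c h y = 1"
  by (simp add: lagrange_lo_def lagrange_mid_def lagrange_hi_def field_simps power2_eq_square)

lemma lagrange_hi_nonpos:
  assumes "h > 0" "c \<le> y" "y \<le> c + h/2"
  shows "lagrange_hi c h y \<le> 0"
  using assms unfolding lagrange_hi_def
  by (intro divide_nonpos_nonneg mult_nonneg_nonpos) auto

lemma lagrange_hi_nonneg:
  assumes "h > 0" "c \<le> y" "c + h/2 \<le> y"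
  shows "0 \<le> lagrange_hi c h y"
  using assms unfolding lagrange_hi_def by (intro divide_nonneg_nonneg mult_nonneg_nonneg) auto

lemma lagrange_hi_has_integral:
  assumes "h > 0"
  shows "(lagrange_hi c h has_integral h / 6) {c..c+h}"
proof -
  define G where "G = (\<lambda>y. (y - c)^2 * (4*(y - c) - 3*h) / (6*h^2))"
  have "(lagrange_hi c h has_integral G (c+h) - G c) {c..c+h}"
  proof (rule fundamental_theorem_of_calculus_interior)
    show "continuous_on {c..c+h} G" unfolding G_def using assms by (intro continuous_intros) auto
  next
    fix y
    have "(G has_real_derivative lagrange_hi c h y) (at y)"
      unfolding G_def using assms
      by (auto intro!: derivative_eq_intros simp: lagrange_hi_def field_simps power2_eq_square)
    then show "(G has_vector_derivative lagrange_hi c h y) (at y)"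
      by (simp add: has_real_derivative_iff_has_vector_derivative)
  qed (use assms in auto)
  moreover have "G (c+h) - G c = h / 6" using assms by (simp add: G_def field_simps power2_eq_square)
  ultimately show ?thesis by simp
qed

lemma lagrange_hi_kernel_integrable:
  assumes "h > 0" "p \<le> q" "\<gamma> < 1"
  shows "(\<lambda>y. lagrange_hi c h y * singular_kernel \<gamma> x y) integrable_on {p..q}"
  by (rule integrable_eq[OF quadratic_kernel_integrable[OF assms(2,3),
        of "2/h^2" "-(4*c+h)/h^2" "c*(2*c+h)/h^2" x]])
     (use assms in \<open>simp add: lagrange_hi_def field_simps power2_eq_square\<close>)

lemma lagrange_mid_kernel_integrable:
  assumes "h > 0" "p \<le> q" "\<gamma> < 1"
  shows "(\<lambda>y. lagrange_mid c h y * singular_kernel \<gamma> x y) integrable_on {p..q}"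
  by (rule integrable_eq[OF quadratic_kernel_integrable[OF assms(2,3),
        of "-4/h^2" "4*(2*c+h)/h^2" "-4*c*(c+h)/h^2" x]])
     (use assms in \<open>simp add: lagrange_mid_def field_simps power2_eq_square\<close>)

lemma integral_le_on_interior:
  fixes f g :: "real \<Rightarrow> real"
  assumes "f integrable_on {p..q}" "g integrable_on {p..q}"
    and "\<And>y. p < y \<Longrightarrow> y < q \<Longrightarrow> f y \<le> g y"
  shows "integral {p..q} f \<le> integral {p..q} g"
proof -
  define g' where "g' = (\<lambda>y. if y \<in> {p<..<q} then g y else f y)"
  have neg: "negligible {p, q}" by auto
  have eq: "g y = g' y" if "y \<in> {p..q} - {p,q}" for y using that by (auto simp: g'_def)
  have "integral {p..q} g = integral {p..q} g'"
    by (rule integral_spike[OF neg]) (simp add: eq)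
  moreover have "g' integrable_on {p..q}"
    by (rule integrable_spike[OF assms(2) neg]) (simp add: eq)
  moreover have "integral {p..q} f \<le> integral {p..q} g'"
    by (rule integral_le[OF assms(1) \<open>g' integrable_on _\<close>]) (auto simp: g'_def assms(3))
  ultimately show ?thesis by simp
qed

lemma integral_sign_change_ge:
  fixes q v w :: "real \<Rightarrow> real"
  assumes "(\<lambda>y. q y * v y) integrable_on {p..r}" "(\<lambda>y. q y * w y) integrable_on {p..r}"
    and "\<And>y. p < y \<Longrightarrow> y \<le> m \<Longrightarrow> q y \<le> 0 \<and> w y \<le> K * v y"
    and "\<And>y. m \<le> y \<Longrightarrow> y < r \<Longrightarrow> 0 \<le> q y \<and> K * v y \<le> w y"
  shows "K * integral {p..r} (\<lambda>y. q y * v y) \<le> integral {p..r} (\<lambda>y. q y * w y)"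
proof -
  have "q y * (K * v y) \<le> q y * w y" if "p < y" "y < r" for y
  proof (cases "y \<le> m")
    case True
    then show ?thesis using assms(3)[OF \<open>p < y\<close>] by (auto intro: mult_left_mono_neg)
  next
    case False
    then show ?thesis using assms(4)[of y] \<open>y < r\<close> by (auto intro: mult_left_mono)
  qed
  then have "integral {p..r} (\<lambda>y. K * (q y * v y)) \<le> integral {p..r} (\<lambda>y. q y * w y)"
    using integrable_on_cmult_left[OF assms(1), of K] assms(2)
    by (intro integral_le_on_interior) (auto simp: algebra_simps)
  then show ?thesis by simp
qed

lemma lagrange_hi_kernel_nonneg_at_lo:
  assumes "h > 0" "0 < \<gamma>" "\<gamma> < 1"
  shows "0 \<le> integral {c..c+h} (\<lambda>y. lagrange_hi c h y * singular_kernel \<gamma> c y)"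
proof -
  define P where "P = h powr (1 - \<gamma>)"
  have h3: "h powr (3 - \<gamma>) = h^2 * P" and h2: "h powr (2 - \<gamma>) = h * P"
    using assms powr_add[of h 2 "1 - \<gamma>"] powr_add[of h 1 "1 - \<gamma>"]
    by (simp_all add: P_def powr_realpow)
  have "((\<lambda>y. (2/h^2 * (y - c)^2 + (-1/h) * (y - c)) * singular_kernel \<gamma> c y) has_integral
      2/h^2 * ((0 powr (3 - \<gamma>) + h powr (3 - \<gamma>)) / (3 - \<gamma>))
    + (-1/h) * ((h powr (2 - \<gamma>) - 0 powr (2 - \<gamma>)) / (2 - \<gamma>))) {c..c+h}"
    using quadratic_kernel_integral[of c c "c+h" \<gamma> "2/h^2" "-1/h"] assms by simp
  moreover have "(\<lambda>y. (2/h^2 * (y - c)^2 + (-1/h) * (y - c)) * singular_kernel \<gamma> c y)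
      = (\<lambda>y. lagrange_hi c h y * singular_kernel \<gamma> c y)"
    using assms by (auto simp: lagrange_hi_def field_simps power2_eq_square)
  moreover have "2/h^2 * ((0 powr (3 - \<gamma>) + h powr (3 - \<gamma>)) / (3 - \<gamma>))
    + (-1/h) * ((h powr (2 - \<gamma>) - 0 powr (2 - \<gamma>)) / (2 - \<gamma>)) = P * (2 / (3 - \<gamma>) - 1 / (2 - \<gamma>))"
    using assms by (simp add: h3 h2 field_simps power2_eq_square)
  moreover have "2 / (3 - \<gamma>) - 1 / (2 - \<gamma>) = (1 - \<gamma>) / ((3 - \<gamma>) * (2 - \<gamma>))"
    using assms by (simp add: field_simps)
  ultimately show ?thesis
    using assms by (simp add: integral_unique P_def)
qed

lemma lagrange_hi_kernel_nonneg_at_mid: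
  assumes "h > 0" "0 < \<gamma>" "\<gamma> < 1"
  shows "0 \<le> integral {c..c+h} (\<lambda>y. lagrange_hi c h y * singular_kernel \<gamma> (c + h/2) y)"
proof -
  define x where "x = c + h/2"
  have "((\<lambda>y. (2/h^2 * (y - x)^2 + (1/h) * (y - x)) * singular_kernel \<gamma> x y) has_integral
      2/h^2 * (((h/2) powr (3 - \<gamma>) + (h/2) powr (3 - \<gamma>)) / (3 - \<gamma>))
    + (1/h) * (((h/2) powr (2 - \<gamma>) - (h/2) powr (2 - \<gamma>)) / (2 - \<gamma>))) {c..c+h}"
    using quadratic_kernel_integral[of c x "c+h" \<gamma> "2/h^2" "1/h"] assms by (simp add: x_def)
  moreover have "(\<lambda>y. (2/h^2 * (y - x)^2 + (1/h) * (y - x)) * singular_kernel \<gamma> x y)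
      = (\<lambda>y. lagrange_hi c h y * singular_kernel \<gamma> x y)"
    using assms by (auto simp: lagrange_hi_def x_def field_simps power2_eq_square)
  ultimately show ?thesis
    using assms by (simp add: integral_unique x_def)
qed

lemma singular_kernel_nonneg: "0 \<le> singular_kernel \<gamma> x y"
  by (simp add: singular_kernel_def)

lemma singular_kernel_factor:
  assumes "x \<le> c" "c < y"
  shows "singular_kernel \<gamma> x y = ((y - c) / (y - x)) powr \<gamma> * singular_kernel \<gamma> c y"
  using assms by (simp add: singular_kernel_def powr_divide)

lemma singular_kernel_mono:
  assumes "y \<le> z" "z < x" "0 \<le> \<gamma>"
  shows "singular_kernel \<gamma> x y \<le> singular_kernel \<gamma> x z"
proof -
  have "(x - z) powr \<gamma> \<le> (x - y) powr \<gamma>" using assms by (intro powr_mono2) auto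
  then show ?thesis using assms by (simp add: singular_kernel_def field_simps)
qed

lemma distance_ratio_mono:
  fixes x c y z :: real
  assumes "x \<le> c" "c < y" "y \<le> z"
  shows "(y - c) / (y - x) \<le> (z - c) / (z - x)"
proof -
  have "(z - c) * (y - x) - (y - c) * (z - x) = (c - x) * (z - y)" by (simp add: algebra_simps)
  then have "(y - c) * (z - x) \<le> (z - c) * (y - x)"
    using assms mult_nonneg_nonneg[of "c - x" "z - y"] by linarith
  then show ?thesis using assms by (simp add: divide_simps)
qed

lemma lagrange_hi_kernel_nonneg:
  assumes "h > 0" "0 < \<gamma>" "\<gamma> < 1" "x \<le> c \<or> x = c + h/2 \<or> c + h \<le> x"
  shows "0 \<le> integral {c..c+h} (\<lambda>y. lagrange_hi c h y * singular_kernel \<gamma> x y)"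
proof -
  define m where "m = c + h/2"
  have hi_x: "(\<lambda>y. lagrange_hi c h y * singular_kernel \<gamma> x y) integrable_on {c..c+h}"
    using assms by (intro lagrange_hi_kernel_integrable) auto
  have sign: "c \<le> y \<Longrightarrow> y \<le> m \<Longrightarrow> lagrange_hi c h y \<le> 0"
              "m \<le> y \<Longrightarrow> 0 \<le> lagrange_hi c h y" for y
    using assms lagrange_hi_nonpos[of h c y] lagrange_hi_nonneg[of h c y] by (auto simp: m_def)
  consider "x \<le> c" | "x = m" | "c + h \<le> x" using assms(4) m_def by blast
  then show ?thesis
  proof cases
    case 1
    \<comment> \<open>Compare with the node \<open>c\<close>: the ratio of the two kernels increases across the cell.\<close>
    define \<rho> where "\<rho> y = (y - c) / (y - x)" for y
    have hi_c: "(\<lambda>y. lagrange_hi c h y * singular_kernel \<gamma> c y) integrable_on {c..c+h}"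
      using assms by (intro lagrange_hi_kernel_integrable) auto
    have "\<rho> m powr \<gamma> * integral {c..c+h} (\<lambda>y. lagrange_hi c h y * singular_kernel \<gamma> c y)
        \<le> integral {c..c+h} (\<lambda>y. lagrange_hi c h y * singular_kernel \<gamma> x y)"
    proof (rule integral_sign_change_ge[OF hi_c hi_x])
      fix y assume "c < y" "y \<le> m"
      have "\<rho> y powr \<gamma> \<le> \<rho> m powr \<gamma>"
        using 1 \<open>c < y\<close> \<open>y \<le> m\<close> assms distance_ratio_mono[of x c y m]
        by (intro powr_mono2) (auto simp: \<rho>_def)
      then show "lagrange_hi c h y \<le> 0 \<and> singular_kernel \<gamma> x y \<le> \<rho> m powr \<gamma> * singular_kernel \<gamma> c y"
        using 1 \<open>c < y\<close> \<open>y \<le> m\<close> sign singular_kernel_factor[of x c y]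
        by (auto simp: \<rho>_def intro!: mult_right_mono singular_kernel_nonneg)
    next
      fix y assume "m \<le> y" "y < c + h"
      have "c < y" using \<open>m \<le> y\<close> assms by (simp add: m_def)
      have "\<rho> m powr \<gamma> \<le> \<rho> y powr \<gamma>"
        using 1 \<open>m \<le> y\<close> assms distance_ratio_mono[of x c m y]
        by (intro powr_mono2) (auto simp: \<rho>_def m_def)
      then show "0 \<le> lagrange_hi c h y \<and> \<rho> m powr \<gamma> * singular_kernel \<gamma> c y \<le> singular_kernel \<gamma> x y"
        using 1 \<open>c < y\<close> \<open>m \<le> y\<close> sign singular_kernel_factor[of x c y]
        by (auto simp: \<rho>_def intro!: mult_right_mono singular_kernel_nonneg)
    qed
    moreover have "0 \<le> \<rho> m powr \<gamma> * integral {c..c+h} (\<lambda>y. lagrange_hi c h y * singular_kernel \<gamma> c y)"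
      using lagrange_hi_kernel_nonneg_at_lo[OF assms(1-3)] by simp
    ultimately show ?thesis by linarith
  next
    case 2
    then show ?thesis using lagrange_hi_kernel_nonneg_at_mid[OF assms(1-3)] by (simp add: m_def)
  next
    case 3
    \<comment> \<open>Compare with the constant weight: the kernel increases across the cell.\<close>
    have hi: "(\<lambda>y. lagrange_hi c h y * 1) integrable_on {c..c+h}"
      using lagrange_hi_has_integral[OF assms(1)] by auto
    have "singular_kernel \<gamma> x m * integral {c..c+h} (\<lambda>y. lagrange_hi c h y * 1)
        \<le> integral {c..c+h} (\<lambda>y. lagrange_hi c h y * singular_kernel \<gamma> x y)"
      using 3 assms sign singular_kernel_mono[of _ _ x \<gamma>]
      by (intro integral_sign_change_ge[OF hi hi_x]) (auto simp: m_def)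
    moreover have "0 \<le> singular_kernel \<gamma> x m * integral {c..c+h} (\<lambda>y. lagrange_hi c h y * 1)"
      using integral_unique[OF lagrange_hi_has_integral[OF assms(1), of c]] assms
        singular_kernel_nonneg[of \<gamma> x m]
      by simp
    ultimately show ?thesis by linarith
  qed
qed

lemma lagrange_lo_kernel_has_integral:
  assumes "h > 0" "0 < \<gamma>" "\<gamma> < 1"
  shows "((\<lambda>y. lagrange_lo c h y * singular_kernel \<gamma> x y) has_integral
          integral {c..c+h} (\<lambda>z. lagrange_hi c h z * singular_kernel \<gamma> (c + (c + h) - x) z)) {c..c+h}"
proof -
  have "(\<lambda>z. lagrange_hi c h z * singular_kernel \<gamma> (c + (c + h) - x) z) integrable_on {c..c+h}"
    using assms by (intro lagrange_hi_kernel_integrable) auto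
  from has_integral_reflect_interval[OF integrable_integral[OF this]] assms show ?thesis
    by (simp add: lagrange_lo_reflect singular_kernel_def abs_minus_commute)
qed

lemma lagrange_lo_kernel_nonneg:
  assumes "h > 0" "0 < \<gamma>" "\<gamma> < 1" "x \<le> c \<or> x = c + h/2 \<or> c + h \<le> x"
  shows "0 \<le> integral {c..c+h} (\<lambda>y. lagrange_lo c h y * singular_kernel \<gamma> x y)"
proof -
  have "c + (c + h) - x \<le> c \<or> c + (c + h) - x = c + h/2 \<or> c + h \<le> c + (c + h) - x"
    using assms(4) by auto
  then show ?thesis
    using lagrange_hi_kernel_nonneg[OF assms(1-3)] integral_unique[OF lagrange_lo_kernel_has_integral[OF assms(1-3)]]
    by simp
qed

lemma lagrange_mid_kernel_nonneg:
  assumes "h > 0" "0 < \<gamma>" "\<gamma> < 1"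
  shows "0 \<le> integral {c..c+h} (\<lambda>y. lagrange_mid c h y * singular_kernel \<gamma> x y)"
  using assms lagrange_mid_kernel_integrable[OF assms(1) _ assms(3)]
  by (intro integral_nonneg) (auto simp: lagrange_mid_def singular_kernel_nonneg)

section \<open>The basis functions on the mesh\<close>

lemma hstep_pos: "a < b \<Longrightarrow> 0 < M \<Longrightarrow> 0 < hstep a b M"
  by (simp add: hstep_def)

lemma hstep_last_node: "0 < M \<Longrightarrow> a + real M * hstep a b M = b"
  by (simp add: hstep_def)

lemma phi_int_eq_zero:
  assumes "0 < hstep a b M"
    "y \<le> a + real l * hstep a b M - hstep a b M \<or> a + real l * hstep a b M + hstep a b M \<le> y"
  shows "phi_int a b M l y = 0"
  using assms by (auto simp: phi_int_def Let_def)

lemma phi_int_eq_lagrange_hi: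
  assumes "0 < hstep a b M" "a \<le> y" "y \<le> b"
    "a + real l * hstep a b M - hstep a b M \<le> y" "y \<le> a + real l * hstep a b M"
  shows "phi_int a b M l y = lagrange_hi (a + real l * hstep a b M - hstep a b M) (hstep a b M) y"
  using assms by (auto simp: phi_int_def Let_def lagrange_hi_def power2_eq_square field_simps)

lemma phi_int_eq_lagrange_lo:
  assumes "0 < hstep a b M" "a \<le> y" "y \<le> b"
    "a + real l * hstep a b M \<le> y" "y \<le> a + real l * hstep a b M + hstep a b M"
  shows "phi_int a b M l y = lagrange_lo (a + real l * hstep a b M) (hstep a b M) y"
  using assms by (cases "y = a + real l * hstep a b M")
    (auto simp: phi_int_def Let_def lagrange_lo_def power2_eq_square field_simps)

lemma phi_mid_eq_zero:
  assumes "0 < hstep a b M"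
    "y \<le> a + real l * hstep a b M - hstep a b M \<or> a + real l * hstep a b M \<le> y"
  shows "phi_mid a b M l y = 0"
  using assms by (auto simp: phi_mid_def Let_def)

lemma phi_mid_eq_lagrange_mid:
  assumes "a + real l * hstep a b M - hstep a b M \<le> y" "y \<le> a + real l * hstep a b M"
  shows "phi_mid a b M l y = lagrange_mid (a + real l * hstep a b M - hstep a b M) (hstep a b M) y"
  using assms by (auto simp: phi_mid_def Let_def lagrange_mid_def)

lemma phi_half_on_cell:
  assumes "a < b" "m < M" and h: "h = hstep a b M" and c: "c = a + real m * h"
    and y: "c \<le> y" "y \<le> c + h"
  shows "phi_half a b M j y = (if j = 2*m then lagrange_lo c h y else 0)
      + (if j = 2*m + 1 then lagrange_mid c h y else 0) + (if j = 2*m + 2 then lagrange_hi c h y else 0)"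
proof -
  have h0: "0 < h" using hstep_pos[OF assms(1), of M] assms(2) h by simp
  have scale: "real i * h \<le> real k * h" if "i \<le> k" for i k
    using h0 that by (intro mult_right_mono) auto
  have "0 \<le> real m * h" using h0 by simp
  then have "a \<le> y" using y c by linarith
  have "c + h \<le> b"
    using scale[of "Suc m" M] assms(2) hstep_last_node[of M a b] h c by (simp add: algebra_simps)
  then have "y \<le> b" using y by simp
  consider l where "j = 2*l" | l where "j = 2*l + 1" by (metis oddE evenE)
  then show ?thesis
  proof cases
    case 1
    then have phi: "phi_half a b M j y = phi_int a b M l y" by (simp add: phi_half_def)
    consider "Suc l < m" | "Suc l = m" | "l = m" | "l = Suc m" | "Suc m < l" by linarith
    then show ?thesis
    proof cases
      case 2
      then have "a + real l * h + h = c" by (auto simp: c algebra_simps)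
      then show ?thesis
        using phi 1 2 y h0 phi_int_eq_zero[of a b M y l] phi_int_eq_lagrange_hi[of a b M y l] \<open>a \<le> y\<close> \<open>y \<le> b\<close>
        by (cases "y = c") (auto simp: h lagrange_hi_def)
    next
      case 3
      then show ?thesis
        using phi 1 y h0 phi_int_eq_lagrange_lo[of a b M y l] \<open>a \<le> y\<close> \<open>y \<le> b\<close> by (simp add: h c)
    next
      case 4
      then have "a + real l * h - h = c" by (simp add: c algebra_simps)
      then show ?thesis
        using phi 1 4 y h0 phi_int_eq_lagrange_hi[of a b M y l] \<open>a \<le> y\<close> \<open>y \<le> b\<close> by (simp add: h)
    qed (use phi 1 y h0 scale[of "Suc (Suc l)" m] scale[of "Suc (Suc m)" l] phi_int_eq_zero[of a b M y l]
          in \<open>auto simp: h c algebra_simps\<close>)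
  next
    case 2
    then have phi: "phi_half a b M j y = phi_mid a b M (Suc l) y" by (simp add: phi_half_def)
    consider "l < m" | "l = m" | "m < l" by linarith
    then show ?thesis
    proof cases
      case 2
      then show ?thesis
        using phi \<open>j = 2*l + 1\<close> y phi_mid_eq_lagrange_mid[of a "Suc l" b M y] by (simp add: h c algebra_simps)
    qed (use phi \<open>j = 2*l + 1\<close> y h0 scale[of "Suc l" m] scale[of "Suc (Suc m)" "Suc l"]
          phi_mid_eq_zero[of a b M y "Suc l"] in \<open>auto simp: h c algebra_simps\<close>)
  qed
qed

lemma has_integral_cells:
  fixes f :: "real \<Rightarrow> 'a::banach"
  assumes "0 \<le> h" "\<And>m. m < M \<Longrightarrow> (f has_integral I m) {a + real m * h .. a + real m * h + h}"
  shows "(f has_integral (\<Sum>m<M. I m)) {a .. a + real M * h}"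
  using assms(2)
proof (induction M)
  case 0
  then show ?case by (simp add: has_integral_refl)
next
  case (Suc M)
  have "(f has_integral (\<Sum>m<M. I m) + I M) {a .. a + real M * h + h}"
    using assms(1) Suc by (intro has_integral_combine[of _ "a + real M * h"]) auto
  then show ?case by (simp add: algebra_simps)
qed

lemma cell_exists:
  assumes "0 < h" "0 < M" "a \<le> y" "y \<le> a + real M * h"
  obtains m where "m < M" "a + real m * h \<le> y" "y \<le> a + real m * h + h"
proof (cases "y = a + real M * h")
  case True
  have "real (M - 1) * h + h = real M * h" using assms(2) by (simp add: of_nat_diff algebra_simps)
  then show ?thesis using assms(1,2) True by (intro that[of "M - 1"]) linarith+
next
  case False
  define s where "s = (y - a) / h"
  have s: "0 \<le> s" "s < real M" "y = a + s * h"
    using assms False by (auto simp: s_def field_simps)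
  have "nat \<lfloor>s\<rfloor> < M" "real (nat \<lfloor>s\<rfloor>) \<le> s" "s \<le> real (nat \<lfloor>s\<rfloor>) + 1"
    using s by linarith+
  moreover have "real (nat \<lfloor>s\<rfloor>) * h \<le> s * h" "s * h \<le> (real (nat \<lfloor>s\<rfloor>) + 1) * h"
    using calculation(2,3) assms(1) by (intro mult_right_mono; simp)+
  ultimately show ?thesis using that[of "nat \<lfloor>s\<rfloor>"] s(3) by (simp add: algebra_simps)
qed

lemma phi_half_partition_of_unity:
  assumes "a < b" "0 < M" "a \<le> y" "y \<le> b"
  shows "(\<Sum>j = 0..2*M. phi_half a b M j y) = 1"
proof -
  define h where "h = hstep a b M"
  have h: "0 < h" using hstep_pos[OF assms(1,2)] by (simp add: h_def)
  obtain m where m: "m < M" "a + real m * h \<le> y" "y \<le> a + real m * h + h"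
    using cell_exists[OF h assms(2,3)] assms(4) hstep_last_node[OF assms(2), of a b] by (auto simp: h_def)
  define c where "c = a + real m * h"
  have "2*m \<in> {0..2*M}" "2*m + 1 \<in> {0..2*M}" "2*m + 2 \<in> {0..2*M}" using m(1) by auto
  then have "(\<Sum>j = 0..2*M. phi_half a b M j y) = lagrange_lo c h y + lagrange_mid c h y + lagrange_hi c h y"
    using phi_half_on_cell[OF assms(1) m(1) h_def c_def] m(2,3)
    by (simp add: c_def sum.distrib sum.delta)
  then show ?thesis using lagrange_sum h by simp
qed

lemma half_grid_position:
  fixes h :: real
  assumes "0 \<le> h" "x = a + real i * (h/2)" "c = a + real m * h"
  shows "x \<le> c \<or> x = c + h/2 \<or> c + h \<le> x"
proof -
  have x: "x = c + (real i - 2 * real m) * (h/2)"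
    using assms by (simp add: algebra_simps)
  consider "i \<le> 2*m" | "i = 2*m + 1" | "2*m + 2 \<le> i" by linarith
  then show ?thesis
  proof cases
    case 1
    then have "(real i - 2 * real m) * (h/2) \<le> 0" using assms(1) by (intro mult_nonpos_nonneg) auto
    then show ?thesis using x by linarith
  next
    case 3
    then have "2 * (h/2) \<le> (real i - 2 * real m) * (h/2)" using assms(1) by (intro mult_right_mono) auto
    then show ?thesis using x by linarith
  qed (use x in simp)
qed

lemma phi_half_kernel_cell:
  assumes "a < b" "m < M" "h = hstep a b M" "c = a + real m * h" "0 < \<gamma>" "\<gamma> < 1"
  shows "\<exists>I\<ge>0. ((\<lambda>y. phi_half a b M j y * singular_kernel \<gamma> (xnode a b M i) y) has_integral I) {c..c+h}"
proof -
  define x where "x = xnode a b M i"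
  have h: "0 < h" using hstep_pos[OF assms(1), of M] assms(2,3) by simp
  have pos: "x \<le> c \<or> x = c + h/2 \<or> c + h \<le> x"
    using half_grid_position[OF _ _ assms(4), of x i] h by (simp add: x_def xnode_def assms(3))
  have on_cell: "phi_half a b M j y * singular_kernel \<gamma> x y =
      (if j = 2*m then lagrange_lo c h y * singular_kernel \<gamma> x y else 0)
    + (if j = 2*m + 1 then lagrange_mid c h y * singular_kernel \<gamma> x y else 0)
    + (if j = 2*m + 2 then lagrange_hi c h y * singular_kernel \<gamma> x y else 0)" if "y \<in> {c..c+h}" for y
    using phi_half_on_cell[OF assms(1-4), of y j] that by (simp add: distrib_right)
  have "((\<lambda>y. phi_half a b M j y * singular_kernel \<gamma> x y) has_integral
      (if j = 2*m then integral {c..c+h} (\<lambda>y. lagrange_lo c h y * singular_kernel \<gamma> x y) else 0)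
    + (if j = 2*m + 1 then integral {c..c+h} (\<lambda>y. lagrange_mid c h y * singular_kernel \<gamma> x y) else 0)
    + (if j = 2*m + 2 then integral {c..c+h} (\<lambda>y. lagrange_hi c h y * singular_kernel \<gamma> x y) else 0))
      {c..c+h}"
    using h assms(5,6) lagrange_lo_kernel_has_integral[of h \<gamma> c x]
      lagrange_mid_kernel_integrable[of h c "c+h" \<gamma> c x] lagrange_hi_kernel_integrable[of h c "c+h" \<gamma> c x]
    by (subst has_integral_cong[OF on_cell])
       (auto intro!: has_integral_add has_integral_0 integrable_integral)
  moreover have "0 \<le> (if j = 2*m then integral {c..c+h} (\<lambda>y. lagrange_lo c h y * singular_kernel \<gamma> x y) else 0)
    + (if j = 2*m + 1 then integral {c..c+h} (\<lambda>y. lagrange_mid c h y * singular_kernel \<gamma> x y) else 0)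
    + (if j = 2*m + 2 then integral {c..c+h} (\<lambda>y. lagrange_hi c h y * singular_kernel \<gamma> x y) else 0)"
    using lagrange_lo_kernel_nonneg[OF h assms(5,6) pos] lagrange_mid_kernel_nonneg[OF h assms(5,6)]
      lagrange_hi_kernel_nonneg[OF h assms(5,6) pos] by simp
  ultimately show ?thesis unfolding x_def by blast
qed

section \<open>The collocation coefficients\<close>

lemma phi_half_kernel_has_nonneg_integral:
  assumes "a < b" "0 < M" "0 < \<gamma>" "\<gamma> < 1"
  shows "\<exists>I\<ge>0. ((\<lambda>y. phi_half a b M j y * singular_kernel \<gamma> (xnode a b M i) y) has_integral I) {a..b}"
proof -
  define h where "h = hstep a b M"
  define f where "f = (\<lambda>y. phi_half a b M j y * singular_kernel \<gamma> (xnode a b M i) y)"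
  have "\<exists>I\<ge>0. (f has_integral I) {a + real m * h .. a + real m * h + h}" if "m < M" for m
    using phi_half_kernel_cell[OF assms(1) that h_def refl assms(3,4), of j i] by (simp add: f_def)
  then obtain I where I: "\<And>m. m < M \<Longrightarrow> 0 \<le> I m \<and> (f has_integral I m) {a + real m * h .. a + real m * h + h}"
    by metis
  have "(f has_integral (\<Sum>m<M. I m)) {a .. a + real M * h}"
    using hstep_pos[OF assms(1,2)] I by (intro has_integral_cells) (auto simp: h_def)
  moreover have "0 \<le> (\<Sum>m<M. I m)" using I by (intro sum_nonneg) auto
  ultimately show ?thesis
    using hstep_last_node[OF assms(2)] unfolding f_def h_def by auto
qed

lemma g_coef_eq_integral:
  "g_coef a b \<gamma> M i j = integral {a..b} (\<lambda>y. phi_half a b M j y * singular_kernel \<gamma> (xnode a b M i) y)"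
  by (simp add: g_coef_def singular_kernel_def)

lemma g_coef_nonneg:
  assumes "a < b" "0 < M" "0 < \<gamma>" "\<gamma> < 1"
  shows "0 \<le> g_coef a b \<gamma> M i j"
  using phi_half_kernel_has_nonneg_integral[OF assms, of j i] by (auto simp: g_coef_eq_integral integral_unique)

lemma g_coef_sum:
  assumes "a < b" "0 < M" "0 < \<gamma>" "\<gamma> < 1"
  shows "(\<Sum>j = 0..2*M. g_coef a b \<gamma> M i j) = d_coef a b \<gamma> M i"
proof -
  define x where "x = xnode a b M i"
  have "(\<Sum>j = 0..2*M. g_coef a b \<gamma> M i j)
      = integral {a..b} (\<lambda>y. \<Sum>j = 0..2*M. phi_half a b M j y * singular_kernel \<gamma> x y)"
    using phi_half_kernel_has_nonneg_integral[OF assms]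
    by (subst integral_sum) (auto simp: g_coef_eq_integral x_def integrable_on_def)
  also have "\<dots> = integral {a..b} (singular_kernel \<gamma> x)"
    using phi_half_partition_of_unity[OF assms(1,2)]
    by (intro integral_cong) (simp add: sum_distrib_right[symmetric])
  also have "\<dots> = d_coef a b \<gamma> M i" by (simp add: d_coef_def singular_kernel_def[abs_def] x_def)
  finally show ?thesis .
qed

lemma d_coef_le:
  assumes "a < b" "0 < M" "0 < \<gamma>" "\<gamma> < 1" "i \<le> 2*M"
  shows "d_coef a b \<gamma> M i \<le> 2 * (b - a) powr (1 - \<gamma>) / (1 - \<gamma>)"
proof -
  define x where "x = xnode a b M i"
  have "real i / 2 * hstep a b M \<le> real M * hstep a b M"
    using assms hstep_pos[OF assms(1,2)] by (intro mult_right_mono) auto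
  moreover have "0 \<le> real i / 2 * hstep a b M" using hstep_pos[OF assms(1,2)] by simp
  ultimately have x: "a \<le> x" "x \<le> b"
    using hstep_last_node[OF assms(2), of a b] unfolding x_def xnode_def by linarith+
  have "d_coef a b \<gamma> M i = ((x - a) powr (1 - \<gamma>) + (b - x) powr (1 - \<gamma>)) / (1 - \<gamma>)"
    using integral_unique[OF kernel_moment[OF x assms(4), of 0]]
    by (simp add: d_coef_def singular_kernel_def x_def)
  also have "\<dots> \<le> 2 * (b - a) powr (1 - \<gamma>) / (1 - \<gamma>)"
    using x assms powr_mono2[of "1 - \<gamma>" "x - a" "b - a"] powr_mono2[of "1 - \<gamma>" "b - x" "b - a"]
    by (intro divide_right_mono) auto
  finally show ?thesis .
qed

lemma coll_A_diag_dominant: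
  assumes "a < b" "0 < M" "0 < \<gamma>" "\<gamma> < 1" "i \<in> {1..2*M - 1}"
  shows "(\<Sum>j\<in>{1..2*M - 1} - {i}. \<bar>coll_A a b \<gamma> M i j\<bar>) \<le> coll_A a b \<gamma> M i i"
proof -
  note g = g_coef_nonneg[OF assms(1-4), of i]
  have "(\<Sum>j\<in>{1..2*M - 1} - {i}. \<bar>coll_A a b \<gamma> M i j\<bar>) = (\<Sum>j\<in>{1..2*M - 1} - {i}. g_coef a b \<gamma> M i j)"
    using g by (intro sum.cong) (auto simp: coll_A_def)
  also have "\<dots> = (\<Sum>j = 1..2*M - 1. g_coef a b \<gamma> M i j) - g_coef a b \<gamma> M i i"
    using assms(5) by (simp add: sum_diff1)
  also have "\<dots> \<le> (\<Sum>j = 0..2*M. g_coef a b \<gamma> M i j) - g_coef a b \<gamma> M i i"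
    using g by (intro diff_right_mono sum_mono2) auto
  also have "\<dots> = coll_A a b \<gamma> M i i"
    using g_coef_sum[OF assms(1-4)] by (simp add: coll_A_def)
  finally show ?thesis .
qed

lemma coll_A_diag_le:
  assumes "a < b" "0 < M" "0 < \<gamma>" "\<gamma> < 1" "i \<le> 2*M"
  shows "coll_A a b \<gamma> M i i \<le> 2 * (b - a) powr (1 - \<gamma>) / (1 - \<gamma>)"
  using d_coef_le[OF assms] g_coef_nonneg[OF assms(1-4), of i i] by (simp add: coll_A_def)

section \<open>Stability of Crank--Nicolson for diagonally dominant matrices\<close>

lemma supnorm_ge: "1 \<le> j \<Longrightarrow> j \<le> n \<Longrightarrow> \<bar>v j\<bar> \<le> supnorm n v"
  unfolding supnorm_def by (intro Max_ge) auto

lemma supnorm_attained: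
  assumes "1 \<le> n"
  obtains i where "1 \<le> i" "i \<le> n" "\<bar>v i\<bar> = supnorm n v"
proof -
  have "supnorm n v \<in> (\<lambda>i. \<bar>v i\<bar>) ` {1..n}"
    unfolding supnorm_def using assms by (intro Max_in) auto
  then show ?thesis using that by auto
qed

lemma supnorm_nonneg: "1 \<le> n \<Longrightarrow> 0 \<le> supnorm n v"
  using supnorm_ge[of 1 n v] by linarith

lemma diag_dominant_row_nonneg:
  fixes A :: "nat \<Rightarrow> nat \<Rightarrow> real"
  assumes "finite J" "i \<in> J" "(\<Sum>j\<in>J - {i}. \<bar>A i j\<bar>) \<le> A i i" "\<And>j. j \<in> J \<Longrightarrow> \<bar>u j\<bar> \<le> \<bar>u i\<bar>"
  shows "0 \<le> u i * (\<Sum>j\<in>J. A i j * u j)"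
proof -
  have "- (u i * (\<Sum>j\<in>J - {i}. A i j * u j)) \<le> \<bar>u i\<bar> * \<bar>\<Sum>j\<in>J - {i}. A i j * u j\<bar>"
    by (simp only: abs_mult[symmetric] abs_ge_minus_self)
  also have "\<dots> \<le> \<bar>u i\<bar> * (\<Sum>j\<in>J - {i}. \<bar>A i j\<bar> * \<bar>u i\<bar>)"
  proof (intro mult_left_mono order_trans[OF sum_abs] sum_mono)
    fix j assume "j \<in> J - {i}"
    then show "\<bar>A i j * u j\<bar> \<le> \<bar>A i j\<bar> * \<bar>u i\<bar>"
      using assms(4)[of j] by (simp add: abs_mult mult_left_mono)
  qed simp
  also have "\<dots> = (\<Sum>j\<in>J - {i}. \<bar>A i j\<bar>) * (\<bar>u i\<bar> * \<bar>u i\<bar>)"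
    by (subst sum_distrib_right[symmetric]) (simp add: mult_ac)
  also have "\<dots> = (\<Sum>j\<in>J - {i}. \<bar>A i j\<bar>) * (u i * u i)"
    by (simp only: abs_mult_self_eq)
  also have "\<dots> \<le> A i i * (u i * u i)"
    using assms(3) by (intro mult_right_mono) auto
  finally have "0 \<le> u i * (A i i * u i + (\<Sum>j\<in>J - {i}. A i j * u j))"
    by (simp add: algebra_simps)
  then show ?thesis
    using assms(1,2) by (simp add: sum.remove)
qed

lemma diag_dominant_row_bound:
  fixes A :: "nat \<Rightarrow> nat \<Rightarrow> real"
  assumes "finite J" "i \<in> J" "(\<Sum>j\<in>J - {i}. \<bar>A i j\<bar>) \<le> A i i" "\<And>j. j \<in> J \<Longrightarrow> \<bar>v j\<bar> \<le> S"
  shows "\<bar>\<Sum>j\<in>J. A i j * v j\<bar> \<le> 2 * A i i * S"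
proof -
  have "0 \<le> (\<Sum>j\<in>J - {i}. \<bar>A i j\<bar>)" by (intro sum_nonneg) simp
  then have "0 \<le> A i i" using assms(3) by linarith
  have "\<bar>\<Sum>j\<in>J. A i j * v j\<bar> \<le> (\<Sum>j\<in>J. \<bar>A i j\<bar> * S)"
    using assms(4) by (intro order_trans[OF sum_abs] sum_mono) (auto simp: abs_mult mult_left_mono)
  also have "\<dots> = (\<bar>A i i\<bar> + (\<Sum>j\<in>J - {i}. \<bar>A i j\<bar>)) * S"
    using assms(1,2) by (simp add: sum.remove sum_distrib_right distrib_right)
  also have "\<dots> \<le> 2 * A i i * S"
    using assms(3) assms(4)[OF assms(2)] \<open>0 \<le> A i i\<close> by (intro mult_right_mono) auto
  finally show ?thesis .
qed

lemma crank_nicolson_step_supnorm: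
  fixes A :: "nat \<Rightarrow> nat \<Rightarrow> real" and u v :: "nat \<Rightarrow> real"
  assumes "1 \<le> n" "0 \<le> \<tau>"
    and dominant: "\<And>i. i \<in> {1..n} \<Longrightarrow> (\<Sum>j\<in>{1..n} - {i}. \<bar>A i j\<bar>) \<le> A i i"
    and diag: "\<And>i. i \<in> {1..n} \<Longrightarrow> A i i \<le> C"
    and step: "\<And>i. i \<in> {1..n} \<Longrightarrow>
      u i + \<tau> / 2 * (\<Sum>j = 1..n. A i j * u j) = v i - \<tau> / 2 * (\<Sum>j = 1..n. A i j * v j)"
  shows "supnorm n u \<le> (1 + \<tau> * C) * supnorm n v"
proof -
  obtain i where i: "i \<in> {1..n}" "\<bar>u i\<bar> = supnorm n u"
    using supnorm_attained[OF assms(1)] by (metis atLeastAtMost_iff)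
  define Au Av where "Au = (\<Sum>j = 1..n. A i j * u j)" and "Av = (\<Sum>j = 1..n. A i j * v j)"
  have "0 \<le> u i * Au"
    unfolding Au_def using i supnorm_ge[of _ n u] by (intro diag_dominant_row_nonneg dominant) auto
  then have "0 \<le> \<tau> * (u i * Au)" using assms(2) by simp
  moreover have "(u i + \<tau> / 2 * Au)^2 = (u i)^2 + \<tau> * (u i * Au) + (\<tau> / 2 * Au)^2"
    by (simp add: power2_eq_square algebra_simps)
  ultimately have "(u i)^2 \<le> (u i + \<tau> / 2 * Au)^2"
    by (simp add: add_increasing2)
  then have "\<bar>u i\<bar> \<le> \<bar>u i + \<tau> / 2 * Au\<bar>"
    by (simp only: abs_le_square_iff)
  then have "supnorm n u \<le> \<bar>v i - \<tau> / 2 * Av\<bar>"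
    using i step[OF i(1)] by (simp add: Au_def Av_def)
  also have "\<dots> \<le> \<bar>v i\<bar> + \<tau> / 2 * \<bar>Av\<bar>"
    using assms(2) abs_triangle_ineq4[of "v i" "\<tau> / 2 * Av"] by (simp add: abs_mult)
  also have "\<dots> \<le> supnorm n v + \<tau> / 2 * (2 * C * supnorm n v)"
  proof -
    have "\<bar>Av\<bar> \<le> 2 * A i i * supnorm n v"
      unfolding Av_def using i supnorm_ge[of _ n v] by (intro diag_dominant_row_bound dominant) auto
    also have "\<dots> \<le> 2 * C * supnorm n v"
      using diag[OF i(1)] supnorm_nonneg[OF assms(1), of v] by (intro mult_right_mono) auto
    finally have "\<bar>Av\<bar> \<le> 2 * C * supnorm n v" .
    then show ?thesis
      using i supnorm_ge[of i n v] assms(2) by (intro add_mono mult_left_mono) auto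
  qed
  also have "\<dots> = (1 + \<tau> * C) * supnorm n v" by (simp add: algebra_simps)
  finally show ?thesis .
qed

lemma bounded_by_power:
  fixes s :: "nat \<Rightarrow> real"
  assumes "0 \<le> q" "\<And>k. 1 \<le> k \<Longrightarrow> k \<le> N \<Longrightarrow> s k \<le> q * s (k - 1)"
  shows "k \<le> N \<Longrightarrow> s k \<le> q^k * s 0"
proof (induction k)
  case (Suc k)
  then have "s (Suc k) \<le> q * s k" using assms(2)[of "Suc k"] by simp
  also have "\<dots> \<le> q * (q^k * s 0)" using Suc assms(1) by (intro mult_left_mono) auto
  finally show ?case by simp
qed simp


theorem crank_nicolson_stability:
  fixes A :: "nat \<Rightarrow> nat \<Rightarrow> real" and \<epsilon> :: "nat \<Rightarrow> nat \<Rightarrow> real"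
  assumes "1 \<le> n" "0 \<le> T" "1 \<le> N"
    and dominant: "\<And>i. i \<in> {1..n} \<Longrightarrow> (\<Sum>j\<in>{1..n} - {i}. \<bar>A i j\<bar>) \<le> A i i"
    and diag: "\<And>i. i \<in> {1..n} \<Longrightarrow> A i i \<le> C"
    and scheme: "\<And>k i. 1 \<le> k \<Longrightarrow> k \<le> N \<Longrightarrow> i \<in> {1..n} \<Longrightarrow>
        \<epsilon> k i + (T / real N) / 2 * (\<Sum>j = 1..n. A i j * \<epsilon> k j)
      = \<epsilon> (k - 1) i - (T / real N) / 2 * (\<Sum>j = 1..n. A i j * \<epsilon> (k - 1) j)"
    and "k \<le> N"
  shows "supnorm n (\<epsilon> k) \<le> exp (T * C) * supnorm n (\<epsilon> 0)"
proof -
  define \<tau> where "\<tau> = T / real N"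
  have \<tau>: "0 \<le> \<tau>" "real N * \<tau> = T" using assms(2,3) by (auto simp: \<tau>_def)
  have "0 \<le> (\<Sum>j\<in>{1..n} - {1}. \<bar>A 1 j\<bar>)" by (intro sum_nonneg) simp
  moreover have "1 \<in> {1..n}" using assms(1) by simp
  ultimately have C: "0 \<le> C" using dominant diag by (meson order_trans)
  have "supnorm n (\<epsilon> k) \<le> (1 + \<tau> * C)^k * supnorm n (\<epsilon> 0)"
    using \<tau>(1) C assms(1,7) scheme mult_nonneg_nonneg[OF \<tau>(1) C]
    by (intro bounded_by_power crank_nicolson_step_supnorm[where A = A] dominant diag)
       (auto simp: \<tau>_def)
  also have "\<dots> \<le> exp (T * C) * supnorm n (\<epsilon> 0)"
  proof (intro mult_right_mono supnorm_nonneg[OF assms(1)])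
    have "(1 + \<tau> * C)^k \<le> exp (\<tau> * C)^k"
      using \<tau> C by (intro power_mono) (auto simp: exp_ge_add_one_self)
    also have "\<dots> = exp (real k * \<tau> * C)" by (simp add: exp_of_nat_mult mult.assoc)
    also have "\<dots> \<le> exp (T * C)"
      using \<tau> C assms(7) by (auto intro!: mult_right_mono)
    finally show "(1 + \<tau> * C)^k \<le> exp (T * C)" .
  qed
  finally show ?thesis .
qed

theorem theorem3p6:
  fixes a b \<gamma> T :: real and M N :: nat and \<epsilon> :: "nat \<Rightarrow> nat \<Rightarrow> real"
  assumes "a < b" and "0 < \<gamma>" and "\<gamma> < 1" and "M \<ge> 2"
    and "T > 0" and "N \<ge> 1"
    and scheme: "\<And>k i. 1 \<le> k \<Longrightarrow> k \<le> N \<Longrightarrow> 1 \<le> i \<Longrightarrow> i \<le> 2 * M - 1 \<Longrightarrow>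
        \<epsilon> k i + (T / real N) / 2 * (\<Sum>j = 1..2 * M - 1. coll_A a b \<gamma> M i j * \<epsilon> k j)
      = \<epsilon> (k - 1) i - (T / real N) / 2 * (\<Sum>j = 1..2 * M - 1. coll_A a b \<gamma> M i j * \<epsilon> (k - 1) j)"
  shows "\<forall>k \<le> N. supnorm (2 * M - 1) (\<epsilon> k)
           \<le> exp (T * (2 * (b - a) powr (1 - \<gamma>) / (1 - \<gamma>))) * supnorm (2 * M - 1) (\<epsilon> 0)"
proof -
  have M: "0 < M" using assms(4) by simp
  have dominant: "\<And>i. i \<in> {1..2*M - 1} \<Longrightarrow>
      (\<Sum>j\<in>{1..2*M - 1} - {i}. \<bar>coll_A a b \<gamma> M i j\<bar>) \<le> coll_A a b \<gamma> M i i"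
    by (rule coll_A_diag_dominant[OF assms(1) M assms(2,3)])
  have diag: "coll_A a b \<gamma> M i i \<le> 2 * (b - a) powr (1 - \<gamma>) / (1 - \<gamma>)"
    if "i \<in> {1..2*M - 1}" for i
    using coll_A_diag_le[OF assms(1) M assms(2,3), of i] that by fastforce
  show ?thesis
    using crank_nicolson_stability[OF _ _ _ dominant diag] scheme assms(4-6) by simp
qed

end
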